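(* (a) If $\mathbf b=(b_1,\dots,b_{k-1})$ is a perfect matching sequence, then $b_v\le v(k-v)$ for every $v=1,\dots,k-1$. (b) For every $1\le v\le k-1$, the sequence $$\mathbf b=(1,2,\dots,v-2,v-1,\ v(k-v),\ k-v-1,k-v-2,\dots,2,1)$$ (i.e. $b_i=i$ for $i<v$, $b_v=v(k-v)$, $b_i=k-i$ for $i>v$) is a perfect matching sequence.
   Context: Fix an integer $k\ge 2$. For a sequence $\mathbf b=(b_1,\dots,b_{k-1})$ of non-negative integers write $|\mathbf b|=\sum_i b_i$. The bipartite graph $\mathcal B_{\mathbf b}$ has upper vertex class $U=\{(j,l):1\le j\le l\le k-1\}$ and lower vertex class $D_{\mathbf b}=\{(i,t):1\le i\le k-1,\ 1\le t\le b_i\}$, with an edge between $(j,l)\in U$ and $(i,t)\in D_{\mathbf b}$ if and only if $j\le i\le l$. The sequence $\mathbf b$ is a matching sequence if $\mathcal B_{\mathbf b}$ has a matching covering all of $D_{\mathbf b}$, and a perfect matching sequence if moreover $|\mathbf b|=\binom k2$. *)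

theory Defs
  imports Main
begin

text \<open>Sequences b = (b_1,...,b_{k-1}) are represented as functions nat => nat;
  only the values at 1..k-1 matter.\<close>

definition upper_class :: "nat \<Rightarrow> (nat \<times> nat) set" where
  "upper_class k = {(j, l). 1 \<le> j \<and> j \<le> l \<and> l \<le> k - 1}"

definition lower_class :: "nat \<Rightarrow> (nat \<Rightarrow> nat) \<Rightarrow> (nat \<times> nat) set" where
  "lower_class k b = {(i, t). 1 \<le> i \<and> i \<le> k - 1 \<and> 1 \<le> t \<and> t \<le> b i}"

definition B_edge :: "nat \<times> nat \<Rightarrow> nat \<times> nat \<Rightarrow> bool" where
  "B_edge u d \<longleftrightarrow> fst u \<le> fst d \<and> fst d \<le> snd u"

text \<open>A matching of the bipartite graph covering all of the lower class is the same
  as an injective choice, for each lower vertex, of an adjacent upper vertex.\<close>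
definition matching_sequence :: "nat \<Rightarrow> (nat \<Rightarrow> nat) \<Rightarrow> bool" where
  "matching_sequence k b \<longleftrightarrow>
     (\<exists>f. inj_on f (lower_class k b) \<and>
          (\<forall>d \<in> lower_class k b. f d \<in> upper_class k \<and> B_edge (f d) d))"

definition perfect_matching_sequence :: "nat \<Rightarrow> (nat \<Rightarrow> nat) \<Rightarrow> bool" where
  "perfect_matching_sequence k b \<longleftrightarrow>
     matching_sequence k b \<and> (\<Sum>i = 1..k - 1. b i) = k choose 2"

end

theory Submission
  imports Defs
begin

text \<open>A lower vertex \<open>(v, t)\<close> is adjacent exactly to the upper vertices of the rectangle
  \<open>{1..v} \<times> {v..k-1}\<close>, so an injective matching covers at most \<open>v (k - v)\<close> of them.
  For the peak sequence, \<open>C(v,2) + v (k - v) + C(k - v, 2) = C(k, 2)\<close>, and a matching is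
  \<open>(i, t) \<mapsto> (t, i)\<close> for \<open>i < v\<close>, \<open>(i, t) \<mapsto> (i, i + t - 1)\<close> for \<open>i > v\<close>, while the
  lower vertices of column \<open>v\<close> enumerate the whole rectangle.  The three images are
  separated by \<open>l < v\<close>, \<open>j > v\<close> and \<open>j \<le> v \<le> l\<close>, which yields an explicit left inverse.\<close>

lemma upper_neighbours_eq:
  "{u \<in> upper_class k. B_edge u (v, t)} = {1..v} \<times> {v..k - 1}"
  by (auto simp: upper_class_def B_edge_def)

lemma card_upper_neighbours:
  "card {u \<in> upper_class k. B_edge u (v, t)} = v * (k - v)"
proof (cases "v = 0 \<or> k = 0")
  case True
  then show ?thesis by (auto simp: upper_neighbours_eq)
next
  case False
  then have "card {v..k - 1} = k - v" by simp
  then show ?thesis by (simp add: upper_neighbours_eq card_cartesian_product)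
qed

theorem matching_sequence_le:
  assumes "matching_sequence k b" and "1 \<le> v" "v \<le> k - 1"
  shows "b v \<le> v * (k - v)"
proof -
  obtain f where inj: "inj_on f (lower_class k b)"
    and adj: "\<And>d. d \<in> lower_class k b \<Longrightarrow> f d \<in> upper_class k \<and> B_edge (f d) d"
    using assms(1) unfolding matching_sequence_def by blast
  define column where "column = Pair v ` {1..b v}"
  have column_sub: "column \<subseteq> lower_class k b"
    using assms(2,3) by (auto simp: column_def lower_class_def)
  have "b v = card column"
    by (simp add: column_def card_image inj_on_def)
  also have "\<dots> = card (f ` column)"
    using inj_on_subset[OF inj column_sub] by (simp add: card_image)
  also have "\<dots> \<le> card {u \<in> upper_class k. B_edge u (v, 1)}"
  proof (rule card_mono)
    show "f ` column \<subseteq> {u \<in> upper_class k. B_edge u (v, 1)}"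
      using adj column_sub by (force simp: column_def B_edge_def)
  qed (simp add: upper_neighbours_eq)
  finally show ?thesis by (simp add: card_upper_neighbours)
qed

lemma Suc_choose_two: "(Suc n choose 2) = (n choose 2) + n"
  by (simp add: numeral_2_eq_2)

lemma add_choose_two: "(m + n) choose 2 = (m choose 2) + m * n + (n choose 2)"
  by (induction n) (simp_all add: Suc_choose_two)

lemma sum_atLeastLessThan_id: "(\<Sum>i = 1..<n. i) = n choose 2"
  by (induction n) (simp_all add: Suc_choose_two)

definition peak_sequence :: "nat \<Rightarrow> nat \<Rightarrow> nat \<Rightarrow> nat" where
  "peak_sequence k v i = (if i < v then i else if i = v then v * (k - v) else k - i)"

lemma sum_peak_sequence:
  assumes "1 \<le> v" "v \<le> k - 1"
  shows "(\<Sum>i = 1..k - 1. peak_sequence k v i) = k choose 2"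
proof -
  define n where "n = k - v"
  have k: "k = v + n" using assms unfolding n_def by linarith
  have split: "{1..k - 1} = {1..<v} \<union> {v} \<union> {v<..k - 1}"
    using assms by auto
  have descent: "(\<Sum>i \<in> {v<..k - 1}. k - i) = (\<Sum>j = 1..<n. j)"
    by (rule sum.reindex_bij_witness[of _ "\<lambda>j. k - j" "\<lambda>i. k - i"]) (auto simp: k)
  have "(\<Sum>i = 1..k - 1. peak_sequence k v i)
      = (\<Sum>i = 1..<v. i) + v * n + (\<Sum>i \<in> {v<..k - 1}. k - i)"
    unfolding split
    by (subst sum.union_disjoint; auto simp: peak_sequence_def n_def)+
  also have "\<dots> = (v choose 2) + v * n + (n choose 2)"
    using descent sum_atLeastLessThan_id[of v] sum_atLeastLessThan_id[of n] by simp
  finally show ?thesis by (simp add: k add_choose_two)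
qed

definition peak_matching :: "nat \<Rightarrow> nat \<Rightarrow> nat \<times> nat \<Rightarrow> nat \<times> nat" where
  "peak_matching k v = (\<lambda>(i, t).
     if i < v then (t, i)
     else if i = v then (1 + (t - 1) div (k - v), v + (t - 1) mod (k - v))
     else (i, i + t - 1))"

definition peak_decoding :: "nat \<Rightarrow> nat \<Rightarrow> nat \<times> nat \<Rightarrow> nat \<times> nat" where
  "peak_decoding k v = (\<lambda>(j, l).
     if l < v then (l, j)
     else if v < j then (j, l + 1 - j)
     else (v, (j - 1) * (k - v) + (l - v) + 1))"

lemma peak_matching_adjacent:
  assumes "d \<in> lower_class k (peak_sequence k v)"
  shows "peak_matching k v d \<in> upper_class k \<and> B_edge (peak_matching k v d) d"
proof -
  obtain i t where d: "d = (i, t)" "1 \<le> i" "i \<le> k - 1" "1 \<le> t" "t \<le> peak_sequence k v i"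
    using assms by (auto simp: lower_class_def)
  consider "i < v" | "i = v" | "v < i" by linarith
  then show ?thesis
  proof cases
    case 2
    have "t - 1 < v * (k - v)" using d 2 by (simp add: peak_sequence_def)
    then have "(t - 1) div (k - v) < v" by (simp add: less_mult_imp_div_less mult.commute)
    moreover have "0 < k - v" using \<open>t - 1 < v * (k - v)\<close> by (cases "k - v") auto
    then have "v + (t - 1) mod (k - v) \<le> k - 1"
      using mod_less_divisor[of "k - v" "t - 1"] by linarith
    ultimately show ?thesis
      using d 2 by (auto simp: peak_matching_def upper_class_def B_edge_def)
  qed (use d in \<open>auto simp: peak_matching_def peak_sequence_def upper_class_def B_edge_def\<close>)
qed

lemma peak_decoding_matching:
  assumes "d \<in> lower_class k (peak_sequence k v)"
  shows "peak_decoding k v (peak_matching k v d) = d"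
proof -
  obtain i t where d: "d = (i, t)" "1 \<le> i" "i \<le> k - 1" "1 \<le> t" "t \<le> peak_sequence k v i"
    using assms by (auto simp: lower_class_def)
  consider "i < v" | "i = v" | "v < i" by linarith
  then show ?thesis
  proof cases
    case 2
    have "t - 1 < v * (k - v)" using d 2 by (simp add: peak_sequence_def)
    then have "(t - 1) div (k - v) < v" by (simp add: less_mult_imp_div_less mult.commute)
    then show ?thesis
      using d 2 div_mult_mod_eq[of "t - 1" "k - v"]
      by (auto simp: peak_matching_def peak_decoding_def)
  qed (use d in \<open>auto simp: peak_matching_def peak_decoding_def peak_sequence_def\<close>)
qed

theorem matching_sequence_peak_sequence: "matching_sequence k (peak_sequence k v)"
  unfolding matching_sequence_def
  using inj_on_inverseI[of _ "peak_decoding k v", OF peak_decoding_matching]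
    peak_matching_adjacent by blast

theorem mainTheorem8:
  fixes k :: nat
  assumes "k \<ge> 2"
  shows "(\<forall>b. perfect_matching_sequence k b \<longrightarrow>
            (\<forall>v \<in> {1..k - 1}. b v \<le> v * (k - v)))
       \<and> (\<forall>v \<in> {1..k - 1}. perfect_matching_sequence k
            (\<lambda>i. if i < v then i else if i = v then v * (k - v) else k - i))"
proof -
  have peak: "(\<lambda>i. if i < v then i else if i = v then v * (k - v) else k - i) = peak_sequence k v"
    for v by (simp add: fun_eq_iff peak_sequence_def)
  show ?thesis
    unfolding perfect_matching_sequence_def peak
    using matching_sequence_le matching_sequence_peak_sequence sum_peak_sequence by auto
qed

end
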